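(* Let $G$ and $G'$ be finite undirected graphs with initial node features $x_v$ (for $v\in V(G)$) and $x'_{v'}$ (for $v'\in V(G')$), and suppose that the one-dimensional Weisfeiler–Lehman test (1-WL), initialized with colors given by the node features, does not distinguish $G$ and $G'$, i.e. at every iteration the multisets of node colors of $G$ and $G'$ coincide. Consider any message-passing GNN with layers \[ h_v^{(\ell+1)}=\sigma\Bigl(\mathrm{AGG}\bigl\{\!\!\{\phi_\ell(h_v^{(\ell)},h_u^{(\ell)},e_{uv}) : u\in\mathcal N(v)\}\!\!\}\bigr)\Bigr),\qquad h_v^{(0)}=x_v, \] where $\mathrm{AGG}$ is any permutation-invariant function of multisets, $\phi_\ell,\sigma$ are arbitrary functions, and the edge feature is the degree-based Forman curvature $e_{uv}=F(u,v)=4-\deg(u)-\deg(v)$. Then for every number of layers $L\ge 0$, the multisets $\{\!\!\{h_v^{(L)}:v\in V(G)\}\!\!\}$ and $\{\!\!\{h_{v'}^{(L)}:v'\in V(G')\}\!\!\}$ coincide; in particular, no such GNN (with any permutation-invariant graph-level readout) distinguishes $G$ and $G'$. That is, such GNNs are no more expressive than 1-WL.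
   Context: 1-WL: starting from initial colors, each iteration replaces the color of node $v$ by an injective encoding of the pair (current color of $v$, multiset of current colors of neighbors of $v$). Two graphs are distinguished by 1-WL if at some iteration their multisets of node colors differ. $\mathcal N(v)$ is the set of neighbors of $v$, and $\{\!\!\{\cdot\}\!\!\}$ denotes a multiset. *)

theory Defs
  imports "HOL-Library.Multiset"
begin

definition fin_graph :: "'v set \<Rightarrow> ('v \<Rightarrow> 'v \<Rightarrow> bool) \<Rightarrow> bool" where
  "fin_graph V E \<longleftrightarrow> finite V \<and> (\<forall>u v. E u v \<longrightarrow> u \<in> V \<and> v \<in> V)
     \<and> (\<forall>u v. E u v \<longrightarrow> E v u) \<and> (\<forall>v. \<not> E v v)"

definition nbrs :: "'v set \<Rightarrow> ('v \<Rightarrow> 'v \<Rightarrow> bool) \<Rightarrow> 'v \<Rightarrow> 'v set" where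
  "nbrs V E v = {u \<in> V. E v u}"

definition deg :: "'v set \<Rightarrow> ('v \<Rightarrow> 'v \<Rightarrow> bool) \<Rightarrow> 'v \<Rightarrow> nat" where
  "deg V E v = card (nbrs V E v)"

definition forman :: "'v set \<Rightarrow> ('v \<Rightarrow> 'v \<Rightarrow> bool) \<Rightarrow> 'v \<Rightarrow> 'v \<Rightarrow> int" where
  "forman V E u v = 4 - int (deg V E u) - int (deg V E v)"

text \<open>1-WL colours: the refinement step is the (injective) free constructor
  pairing the current colour with the multiset of neighbour colours.\<close>
datatype 'c wlcol = Init 'c | Step "'c wlcol" "'c wlcol multiset"

fun wl :: "'v set \<Rightarrow> ('v \<Rightarrow> 'v \<Rightarrow> bool) \<Rightarrow> ('v \<Rightarrow> 'c) \<Rightarrow> nat \<Rightarrow> 'v \<Rightarrow> 'c wlcol" where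
  "wl V E x 0 v = Init (x v)"
| "wl V E x (Suc k) v = Step (wl V E x k v) (image_mset (wl V E x k) (mset_set (nbrs V E v)))"

definition wl_indist :: "'v set \<Rightarrow> ('v \<Rightarrow> 'v \<Rightarrow> bool) \<Rightarrow> ('v \<Rightarrow> 'c)
    \<Rightarrow> 'w set \<Rightarrow> ('w \<Rightarrow> 'w \<Rightarrow> bool) \<Rightarrow> ('w \<Rightarrow> 'c) \<Rightarrow> bool" where
  "wl_indist V E x V' E' x' \<longleftrightarrow>
     (\<forall>k. image_mset (wl V E x k) (mset_set V) = image_mset (wl V' E' x' k) (mset_set V'))"

fun gnn :: "(nat \<Rightarrow> 'h \<Rightarrow> 'h \<Rightarrow> int \<Rightarrow> 'm) \<Rightarrow> ('m multiset \<Rightarrow> 'a) \<Rightarrow> ('a \<Rightarrow> 'h)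
    \<Rightarrow> 'v set \<Rightarrow> ('v \<Rightarrow> 'v \<Rightarrow> bool) \<Rightarrow> ('v \<Rightarrow> 'h) \<Rightarrow> nat \<Rightarrow> 'v \<Rightarrow> 'h" where
  "gnn \<phi> AGG \<sigma> V E x 0 v = x v"
| "gnn \<phi> AGG \<sigma> V E x (Suc l) v =
     \<sigma> (AGG (image_mset (\<lambda>u. \<phi> l (gnn \<phi> AGG \<sigma> V E x l v) (gnn \<phi> AGG \<sigma> V E x l u) (forman V E u v))
                 (mset_set (nbrs V E v))))"

end

theory Submission
  imports Defs
begin

text \<open>A 1-WL colour after round \<open>L + 1\<close> records the initial feature of its node, the node's
  degree (the size of the round-1 neighbour multiset) and, recursively, the colours of its
  neighbours. This is exactly the data an \<open>L\<close>-layer Forman-curvature GNN reads, so its output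
  at a node is a fixed function of that node's WL colour; equal colour multisets therefore give
  equal feature multisets.\<close>

fun initial_colour :: "'c wlcol \<Rightarrow> 'c" where
  "initial_colour (Init a) = a"
| "initial_colour (Step c M) = initial_colour c"

fun first_round_degree :: "'c wlcol \<Rightarrow> nat" where
  "first_round_degree (Init a) = 0"
| "first_round_degree (Step (Init a) M) = size M"
| "first_round_degree (Step (Step c N) M) = first_round_degree (Step c N)"

text \<open>Only colours of the form \<open>wl (Suc l) v\<close> are ever evaluated, so the value on \<open>Init\<close>
  at positive depth is irrelevant.\<close>
fun gnn_on_colour :: "(nat \<Rightarrow> 'h \<Rightarrow> 'h \<Rightarrow> int \<Rightarrow> 'm) \<Rightarrow> ('m multiset \<Rightarrow> 'a) \<Rightarrow> ('a \<Rightarrow> 'h)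
    \<Rightarrow> nat \<Rightarrow> 'h wlcol \<Rightarrow> 'h" where
  "gnn_on_colour \<phi> AGG \<sigma> 0 c = initial_colour c"
| "gnn_on_colour \<phi> AGG \<sigma> (Suc l) (Init a) = undefined"
| "gnn_on_colour \<phi> AGG \<sigma> (Suc l) (Step c M) =
     \<sigma> (AGG (image_mset (\<lambda>d. \<phi> l (gnn_on_colour \<phi> AGG \<sigma> l c) (gnn_on_colour \<phi> AGG \<sigma> l d)
           (4 - int (first_round_degree d) - int (first_round_degree c))) M))"

lemma initial_colour_wl: "initial_colour (wl V E x k v) = x v"
  by (induction k) auto

lemma first_round_degree_wl: "first_round_degree (wl V E x (Suc k) v) = deg V E v"
  by (induction k) (simp_all add: deg_def)

lemma gnn_eq_gnn_on_colour_wl: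
  "gnn \<phi> AGG \<sigma> V E x l v = gnn_on_colour \<phi> AGG \<sigma> l (wl V E x (Suc l) v)"
proof (induction l arbitrary: v)
  case 0
  show ?case by (simp add: initial_colour_wl)
next
  case (Suc l)
  have "gnn \<phi> AGG \<sigma> V E x (Suc l) v =
      \<sigma> (AGG (image_mset (\<lambda>u. \<phi> l (gnn_on_colour \<phi> AGG \<sigma> l (wl V E x (Suc l) v))
          (gnn_on_colour \<phi> AGG \<sigma> l (wl V E x (Suc l) u))
          (4 - int (first_round_degree (wl V E x (Suc l) u))
             - int (first_round_degree (wl V E x (Suc l) v))))
        (mset_set (nbrs V E v))))"
    by (simp only: gnn.simps Suc.IH forman_def first_round_degree_wl)
  also have "\<dots> = gnn_on_colour \<phi> AGG \<sigma> (Suc l) (wl V E x (Suc (Suc l)) v)"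
    by (simp only: wl.simps(2)[of V E x "Suc l"] gnn_on_colour.simps multiset.map_comp o_def)
  finally show ?case .
qed

lemma image_mset_eq_if_factors_through_wl:
  assumes "wl_indist V E x V' E' x'"
    and "\<And>v. f v = F (wl V E x k v)" and "\<And>w. g w = F (wl V' E' x' k w)"
  shows "image_mset f (mset_set V) = image_mset g (mset_set V')"
proof -
  have "f = F \<circ> wl V E x k" and "g = F \<circ> wl V' E' x' k"
    using assms(2,3) by auto
  then show ?thesis
    using assms(1) by (simp add: wl_indist_def flip: multiset.map_comp)
qed

theorem theorem4p1:
  fixes V :: "'v set" and E :: "'v \<Rightarrow> 'v \<Rightarrow> bool" and x :: "'v \<Rightarrow> 'h"
    and V' :: "'w set" and E' :: "'w \<Rightarrow> 'w \<Rightarrow> bool" and x' :: "'w \<Rightarrow> 'h"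
    and \<phi> :: "nat \<Rightarrow> 'h \<Rightarrow> 'h \<Rightarrow> int \<Rightarrow> 'm" and AGG :: "'m multiset \<Rightarrow> 'a" and \<sigma> :: "'a \<Rightarrow> 'h"
  assumes "fin_graph V E" and "fin_graph V' E'"
    and "wl_indist V E x V' E' x'"
  shows "\<forall>L. image_mset (gnn \<phi> AGG \<sigma> V E x L) (mset_set V)
           = image_mset (gnn \<phi> AGG \<sigma> V' E' x' L) (mset_set V')"
proof
  fix L
  show "image_mset (gnn \<phi> AGG \<sigma> V E x L) (mset_set V)
      = image_mset (gnn \<phi> AGG \<sigma> V' E' x' L) (mset_set V')"
    by (rule image_mset_eq_if_factors_through_wl[OF assms(3)]) (rule gnn_eq_gnn_on_colour_wl)+
qed

end
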